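(* The maximal value of $\ell$ on $G(e,e,n)$ is $n(n-1)$. An element $w\in G(e,e,n)$ satisfies $\ell(w)=n(n-1)$ if and only if $w$ is a diagonal matrix with $w[i,i]\neq 1$ for all $2\le i\le n$; such an element has the reduced expression $(t_{k_2}t_0)(s_3t_{k_3}t_0s_3)\cdots(s_n\cdots s_3t_{k_n}t_0s_3\cdots s_n)$ where $w[i,i]=\zeta_e^{k_i}$, $1\le k_i\le e-1$. There are exactly $(e-1)^{n-1}$ elements of maximal length.
   Context: Let $e\ge 2$, $n\ge 2$, $\zeta_e=e^{2\pi i/e}$. $G(e,e,n)$ is the group of $n\times n$ monomial matrices with nonzero entries $e$-th roots of unity whose product is $1$; $w[i,c]$ is the $(i,c)$ entry. For $i\in\mathbb{Z}/e\mathbb{Z}$, $t_i$ is the matrix with $(1,2)$ entry $\zeta_e^{-i}$, $(2,1)$ entry $\zeta_e^{i}$, $(j,j)$ entry $1$ for $3\le j\le n$, other entries $0$; for $3\le j\le n$, $s_j$ is the permutation matrix of the transposition $(j-1\ j)$. $X=\{t_0,\dots,t_{e-1},s_3,\dots,s_n\}$ and $\ell$ is the word length with respect to $X$. *)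

theory Defs
  imports Complex_Main "Jordan_Normal_Form.Matrix"
begin

text \<open>Matrices are n x n complex matrices of Jordan_Normal_Form (0-indexed internally).
  The paper's entry w[i,c] (1-indexed) is entry w i c.\<close>

definition entry :: "complex mat \<Rightarrow> nat \<Rightarrow> nat \<Rightarrow> complex" where
  "entry w i c = w $$ (i - 1, c - 1)"

definition zeta :: "nat \<Rightarrow> complex" where
  "zeta e = cis (2 * pi / real e)"

definition monomial_mat :: "nat \<Rightarrow> complex mat \<Rightarrow> bool" where
  "monomial_mat n A \<longleftrightarrow> A \<in> carrier_mat n n
     \<and> (\<forall>i<n. \<exists>!j. j < n \<and> A $$ (i, j) \<noteq> 0)
     \<and> (\<forall>j<n. \<exists>!i. i < n \<and> A $$ (i, j) \<noteq> 0)"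

definition Geen :: "nat \<Rightarrow> nat \<Rightarrow> complex mat set" where
  "Geen e n = {A. monomial_mat n A
     \<and> (\<forall>i<n. \<forall>j<n. A $$ (i, j) \<noteq> 0 \<longrightarrow> A $$ (i, j) ^ e = 1)
     \<and> (\<Prod>i<n. \<Prod>j<n. if A $$ (i, j) \<noteq> 0 then A $$ (i, j) else 1) = 1}"

definition tgen :: "nat \<Rightarrow> nat \<Rightarrow> nat \<Rightarrow> complex mat" where
  "tgen e n i = mat n n (\<lambda>(a, b).
     if a = 0 \<and> b = 1 then inverse (zeta e ^ i)
     else if a = 1 \<and> b = 0 then zeta e ^ i
     else if a = b \<and> a \<ge> 2 then 1 else 0)"

text \<open>s_j (3 <= j <= n): permutation matrix of the transposition (j-1 j), 1-indexed.\<close>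
definition sgen :: "nat \<Rightarrow> nat \<Rightarrow> complex mat" where
  "sgen n j = mat n n (\<lambda>(a, b).
     if b = Transposition.transpose (j - 2) (j - 1) a then 1 else 0)"

definition gens :: "nat \<Rightarrow> nat \<Rightarrow> complex mat set" where
  "gens e n = {tgen e n i | i. i < e} \<union> {sgen n j | j. 3 \<le> j \<and> j \<le> n}"

definition word_prod :: "nat \<Rightarrow> complex mat list \<Rightarrow> complex mat" where
  "word_prod n ws = foldr (*) ws (1\<^sub>m n)"

definition wlen :: "nat \<Rightarrow> nat \<Rightarrow> complex mat \<Rightarrow> nat" where
  "wlen e n w = (LEAST k. \<exists>ws. set ws \<subseteq> gens e n \<and> length ws = k \<and> word_prod n ws = w)"

definition diagonal :: "nat \<Rightarrow> complex mat \<Rightarrow> bool" where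
  "diagonal n w \<longleftrightarrow> (\<forall>i<n. \<forall>j<n. i \<noteq> j \<longrightarrow> w $$ (i, j) = 0)"

text \<open>The word (t_{k_2} t_0)(s_3 t_{k_3} t_0 s_3)...(s_n...s_3 t_{k_n} t_0 s_3...s_n).\<close>
definition block :: "nat \<Rightarrow> nat \<Rightarrow> (nat \<Rightarrow> nat) \<Rightarrow> nat \<Rightarrow> complex mat list" where
  "block e n k i = map (sgen n) (rev [3..<i+1]) @ [tgen e n (k i), tgen e n 0]
                    @ map (sgen n) [3..<i+1]"

definition max_word :: "nat \<Rightarrow> nat \<Rightarrow> (nat \<Rightarrow> nat) \<Rightarrow> complex mat list" where
  "max_word e n k = concat (map (block e n k) [2..<n+1])"

end

theory Submission
  imports Defs
begin

text \<open>
  Write \<open>w \<in> G(e,e,n)\<close> as the monomial matrix with entry \<open>a i\<close> in row \<open>i\<close> and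
  column \<open>\<sigma> i\<close>, and give each pair of rows \<open>j < i\<close> the weight 1 if \<open>\<sigma>\<close> inverts it,
  2 if it does not but \<open>a i \<noteq> 1\<close>, and 0 otherwise. Right multiplication by a generator
  swaps two adjacent columns (and for \<open>t\<^sub>k\<close> rescales them), which changes the weight of
  exactly one pair by one; so the total weight is a lower bound for the length. Conversely,
  if no generator lowers the weight then the rows carrying adjacent columns are in order and
  all but the first carry 1, so \<open>w = 1\<close>; hence the length equals the weight.
  The weight is at most \<open>2 \<cdot> n(n-1)/2\<close>, with equality exactly when \<open>\<sigma> = id\<close> and
  \<open>a i \<noteq> 1\<close> for all \<open>i \<ge> 1\<close>. Such a diagonal element is determined by its entries
  \<open>2, \<dots>, n\<close>, which are arbitrary non-trivial \<open>e\<close>-th roots of unity, and the word of the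
  theorem realises it with \<open>2 (i - 1)\<close> letters for the \<open>i\<close>-th entry.
\<close>

section \<open>Monomial matrices\<close>

abbreviation adj_swap :: "nat \<Rightarrow> nat \<Rightarrow> nat" where
  "adj_swap c \<equiv> Transposition.transpose c (Suc c)"

definition monom_mat :: "nat \<Rightarrow> (nat \<Rightarrow> nat) \<Rightarrow> (nat \<Rightarrow> complex) \<Rightarrow> complex mat" where
  "monom_mat n \<sigma> a = mat n n (\<lambda>(i, j). if j = \<sigma> i then a i else 0)"

definition Geen_data :: "nat \<Rightarrow> nat \<Rightarrow> (nat \<Rightarrow> nat) \<Rightarrow> (nat \<Rightarrow> complex) \<Rightarrow> bool" where
  "Geen_data e n \<sigma> a \<longleftrightarrow> (\<forall>i<n. \<sigma> i < n) \<and> inj_on \<sigma> {..<n} \<and> (\<forall>i<n. a i ^ e = 1)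
     \<and> (\<Prod>i<n. a i) = 1"

lemma monom_mat_carrier [simp]: "monom_mat n \<sigma> a \<in> carrier_mat n n"
  and monom_mat_dim [simp]: "dim_row (monom_mat n \<sigma> a) = n" "dim_col (monom_mat n \<sigma> a) = n"
  by (simp_all add: monom_mat_def)

lemma monom_mat_index [simp]:
  "i < n \<Longrightarrow> j < n \<Longrightarrow> monom_mat n \<sigma> a $$ (i, j) = (if j = \<sigma> i then a i else 0)"
  by (simp add: monom_mat_def)

lemma monom_mat_cong:
  "(\<And>i. i < n \<Longrightarrow> \<sigma> i = \<sigma>' i \<and> a i = a' i) \<Longrightarrow> monom_mat n \<sigma> a = monom_mat n \<sigma>' a'"
  by (rule eq_matI) auto

lemma one_eq_monom_mat: "1\<^sub>m n = monom_mat n id (\<lambda>_. 1)"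
  by (rule eq_matI) auto

lemma monom_mat_mult:
  assumes "\<forall>i<n. \<sigma> i < n"
  shows "monom_mat n \<sigma> a * monom_mat n \<pi> b = monom_mat n (\<pi> \<circ> \<sigma>) (\<lambda>i. a i * b (\<sigma> i))"
proof (rule eq_matI)
  fix i j assume "i < dim_row (monom_mat n (\<pi> \<circ> \<sigma>) (\<lambda>i. a i * b (\<sigma> i)))"
    "j < dim_col (monom_mat n (\<pi> \<circ> \<sigma>) (\<lambda>i. a i * b (\<sigma> i)))"
  hence i: "i < n" and j: "j < n" by auto
  have "(monom_mat n \<sigma> a * monom_mat n \<pi> b) $$ (i, j)
      = (\<Sum>k = 0..<n. (if k = \<sigma> i then a i else 0) * (if j = \<pi> k then b k else 0))"
    using i j by (simp add: index_mult_mat scalar_prod_def)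
  also have "\<dots> = (\<Sum>k = 0..<n. (if k = \<sigma> i then a i * (if j = \<pi> k then b k else 0) else 0))"
    by (rule sum.cong) auto
  also have "\<dots> = a i * (if j = \<pi> (\<sigma> i) then b (\<sigma> i) else 0)"
    using assms i by (simp add: sum.delta')
  finally show "(monom_mat n \<sigma> a * monom_mat n \<pi> b) $$ (i, j)
      = monom_mat n (\<pi> \<circ> \<sigma>) (\<lambda>i. a i * b (\<sigma> i)) $$ (i, j)"
    using i j by simp
qed auto

lemma monom_mat_eqD:
  assumes "monom_mat n \<sigma> a = monom_mat n \<sigma>' a'" "\<sigma> i < n" "a i \<noteq> 0" "i < n"
  shows "\<sigma> i = \<sigma>' i \<and> a i = a' i"
proof -
  have "monom_mat n \<sigma> a $$ (i, \<sigma> i) = monom_mat n \<sigma>' a' $$ (i, \<sigma> i)" using assms(1) by simp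
  thus ?thesis using assms(2-4) by (auto split: if_splits)
qed

lemma Geen_data_nonzero: "Geen_data e n \<sigma> a \<Longrightarrow> 0 < e \<Longrightarrow> i < n \<Longrightarrow> a i \<noteq> 0"
  unfolding Geen_data_def by (metis zero_neq_one zero_power)

lemma Geen_data_image: "Geen_data e n \<sigma> a \<Longrightarrow> \<sigma> ` {..<n} = {..<n}"
  unfolding Geen_data_def by (intro card_subset_eq) (auto simp: card_image)

lemma Geen_data_preimage:
  assumes "Geen_data e n \<sigma> a" "c < n"
  obtains u where "u < n" "\<sigma> u = c"
  using Geen_data_image[OF assms(1)] assms(2) by (metis imageE lessThan_iff)

lemma prod_if_nonzero_single:
  fixes x :: complex and s n :: nat
  assumes "s < n"
  shows "(\<Prod>j<n. if (if j = s then x else 0) \<noteq> 0 then (if j = s then x else 0) else 1)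
       = (if x \<noteq> 0 then x else 1)"
proof -
  have "(\<Prod>j<n. if (if j = s then x else 0) \<noteq> 0 then (if j = s then x else 0) else 1)
      = (\<Prod>j<n. if j = s then (if x \<noteq> 0 then x else 1) else 1)"
    by (rule prod.cong) auto
  also have "\<dots> = (if x \<noteq> 0 then x else 1)" using assms by (subst prod.delta) auto
  finally show ?thesis .
qed

lemma monom_mat_entries_prod:
  assumes "\<forall>i<n. \<sigma> i < n" "\<forall>i<n. a i \<noteq> 0"
  shows "(\<Prod>i<n. \<Prod>j<n. if monom_mat n \<sigma> a $$ (i, j) \<noteq> 0 then monom_mat n \<sigma> a $$ (i, j) else 1)
       = (\<Prod>i<n. a i)"
proof (rule prod.cong[OF refl])
  fix i assume "i \<in> {..<n}"
  hence i: "i < n" by simp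
  have "(\<Prod>j<n. if monom_mat n \<sigma> a $$ (i, j) \<noteq> 0 then monom_mat n \<sigma> a $$ (i, j) else 1)
     = (\<Prod>j<n. if (if j = \<sigma> i then a i else 0) \<noteq> 0 then (if j = \<sigma> i then a i else 0) else 1)"
    using i by (intro prod.cong) auto
  also have "\<dots> = a i" using prod_if_nonzero_single[of "\<sigma> i" n "a i"] assms i by auto
  finally show "(\<Prod>j<n. if monom_mat n \<sigma> a $$ (i, j) \<noteq> 0 then monom_mat n \<sigma> a $$ (i, j) else 1)
      = a i" .
qed

lemma monom_mat_in_Geen:
  assumes g: "Geen_data e n \<sigma> a" and e: "0 < e"
  shows "monom_mat n \<sigma> a \<in> Geen e n"
proof -
  have s: "\<forall>i<n. \<sigma> i < n" and inj: "inj_on \<sigma> {..<n}" and r: "\<forall>i<n. a i ^ e = 1"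
    and p: "(\<Prod>i<n. a i) = 1" using g unfolding Geen_data_def by auto
  have nz: "\<forall>i<n. a i \<noteq> 0" using Geen_data_nonzero[OF g e] by blast
  have "monomial_mat n (monom_mat n \<sigma> a)"
    unfolding monomial_mat_def
  proof (intro conjI allI impI)
    fix i assume "i < n"
    thus "\<exists>!j. j < n \<and> monom_mat n \<sigma> a $$ (i, j) \<noteq> 0"
      using s nz by (intro ex1I[of _ "\<sigma> i"]) (auto split: if_splits)
  next
    fix j assume j: "j < n"
    obtain u where u: "u < n" "\<sigma> u = j" using Geen_data_preimage[OF g j] .
    show "\<exists>!i. i < n \<and> monom_mat n \<sigma> a $$ (i, j) \<noteq> 0"
    proof (rule ex1I[of _ u])
      fix y assume "y < n \<and> monom_mat n \<sigma> a $$ (y, j) \<noteq> 0"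
      hence "y < n" "\<sigma> y = j" using j by (auto split: if_splits)
      thus "y = u" using u inj by (auto simp: inj_on_def)
    qed (use u nz j in auto)
  qed simp
  thus ?thesis
    using r p monom_mat_entries_prod[OF s nz] unfolding Geen_def by simp
qed

lemma Geen_obtain_data:
  assumes "w \<in> Geen e n"
  obtains \<sigma> a where "Geen_data e n \<sigma> a" "w = monom_mat n \<sigma> a"
proof -
  have mm: "monomial_mat n w" and r: "\<forall>i<n. \<forall>j<n. w $$ (i, j) \<noteq> 0 \<longrightarrow> w $$ (i, j) ^ e = 1"
    and p: "(\<Prod>i<n. \<Prod>j<n. if w $$ (i, j) \<noteq> 0 then w $$ (i, j) else 1) = 1"
    using assms unfolding Geen_def by auto
  have car: "w \<in> carrier_mat n n" and rows: "\<And>i. i < n \<Longrightarrow> \<exists>!j. j < n \<and> w $$ (i, j) \<noteq> 0"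
    and cols: "\<And>j. j < n \<Longrightarrow> \<exists>!i. i < n \<and> w $$ (i, j) \<noteq> 0"
    using mm unfolding monomial_mat_def by auto
  define \<sigma> where "\<sigma> i = (THE j. j < n \<and> w $$ (i, j) \<noteq> 0)" for i
  define a where "a i = w $$ (i, \<sigma> i)" for i
  have \<sigma>: "\<sigma> i < n \<and> a i \<noteq> 0" if "i < n" for i
    unfolding \<sigma>_def a_def by (rule theI'[OF rows[OF that]])
  have \<sigma>_unique: "j = \<sigma> i" if "i < n" "j < n" "w $$ (i, j) \<noteq> 0" for i j
    unfolding \<sigma>_def using the1_equality[OF rows[OF that(1)]] that by simp
  have w: "w = monom_mat n \<sigma> a"
    by (rule eq_matI) (use car \<sigma>_unique in \<open>auto simp: a_def\<close>)
  have "inj_on \<sigma> {..<n}"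
  proof (rule inj_onI)
    fix x y assume "x \<in> {..<n}" "y \<in> {..<n}" "\<sigma> x = \<sigma> y"
    thus "x = y" using cols[of "\<sigma> x"] \<sigma> by (metis a_def lessThan_iff)
  qed
  moreover have "(\<Prod>i<n. a i) = 1"
    using p monom_mat_entries_prod[of n \<sigma> a] \<sigma> unfolding w[symmetric] by simp
  ultimately have "Geen_data e n \<sigma> a"
    unfolding Geen_data_def using \<sigma> r by (auto simp: a_def)
  thus thesis using w that by blast
qed

lemma Geen_data_mult:
  assumes "Geen_data e n \<sigma> a" "Geen_data e n \<pi> b"
  shows "Geen_data e n (\<pi> \<circ> \<sigma>) (\<lambda>i. a i * b (\<sigma> i))"
proof -
  have s: "\<forall>i<n. \<sigma> i < n" "inj_on \<sigma> {..<n}" "\<forall>i<n. a i ^ e = 1" "(\<Prod>i<n. a i) = 1"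
    using assms(1) unfolding Geen_data_def by auto
  have p: "\<forall>i<n. \<pi> i < n" "inj_on \<pi> {..<n}" "\<forall>i<n. b i ^ e = 1" "(\<Prod>i<n. b i) = 1"
    using assms(2) unfolding Geen_data_def by auto
  have im: "\<sigma> ` {..<n} = {..<n}" by (rule Geen_data_image[OF assms(1)])
  have "(\<Prod>i<n. b (\<sigma> i)) = (\<Prod>i\<in>\<sigma> ` {..<n}. b i)"
    using s(2) by (simp add: prod.reindex)
  hence "(\<Prod>i<n. b (\<sigma> i)) = 1" using im p(4) by simp
  moreover have "inj_on (\<pi> \<circ> \<sigma>) {..<n}"
    using s(2) p(2) im by (intro comp_inj_on) auto
  ultimately show ?thesis
    unfolding Geen_data_def using s p by (simp add: power_mult_distrib prod.distrib)
qed

section \<open>Roots of unity and the generators\<close>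

lemma zeta_nonzero [simp]: "zeta e \<noteq> 0"
  by (simp add: zeta_def)

lemma zeta_power: "zeta e ^ k = cis (2 * pi * real k / real e)"
  by (simp add: zeta_def DeMoivre ac_simps)

lemma zeta_power_root: "0 < e \<Longrightarrow> (zeta e ^ k) ^ e = 1"
proof -
  assume "0 < e"
  have "(zeta e ^ k) ^ e = (zeta e ^ e) ^ k" by (simp add: power_mult[symmetric] mult.commute)
  also have "zeta e ^ e = 1" using \<open>0 < e\<close> by (simp add: zeta_power complex_eq_iff)
  finally show ?thesis by simp
qed

lemma root_unity_eq_zeta_power:
  assumes "0 < e" "z ^ e = 1"
  obtains k where "k < e" "zeta e ^ k = z"
proof -
  have "z \<in> (\<lambda>k. cis (2 * pi * real k / real e)) ` {..<e}"
    using bij_betw_roots_unity[OF assms(1)] assms(2) unfolding bij_betw_def by auto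
  thus thesis using that by (auto simp: zeta_power)
qed

definition tgen_diag :: "nat \<Rightarrow> nat \<Rightarrow> nat \<Rightarrow> complex" where
  "tgen_diag e k r = (if r = 0 then inverse (zeta e ^ k) else if r = 1 then zeta e ^ k else 1)"

lemma tgen_eq_monom_mat: "tgen e n k = monom_mat n (adj_swap 0) (tgen_diag e k)"
  by (rule eq_matI) (auto simp: tgen_def tgen_diag_def transpose_def)

lemma sgen_eq_monom_mat: "sgen n (c + 2) = monom_mat n (adj_swap c) (\<lambda>_. 1)"
  by (rule eq_matI) (auto simp: sgen_def)

lemma Geen_data_tgen:
  assumes "0 < e" "2 \<le> n"
  shows "Geen_data e n (adj_swap 0) (tgen_diag e k)"
proof -
  have "(\<Prod>i<n. tgen_diag e k i)
      = (\<Prod>i<n. (if i = 0 then inverse (zeta e ^ k) else 1) * (if i = 1 then zeta e ^ k else 1))"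
    by (rule prod.cong) (auto simp: tgen_diag_def)
  also have "\<dots> = 1"
    using assms(2) by (simp add: prod.distrib)
  finally show ?thesis
    using assms by (auto simp: Geen_data_def tgen_diag_def zeta_power_root power_inverse
        transpose_def inj_on_def)
qed

lemma Geen_data_sgen: "Suc c < n \<Longrightarrow> Geen_data e n (adj_swap c) (\<lambda>_. 1)"
  by (auto simp: Geen_data_def transpose_def inj_on_def)

lemma tgen_in_gens: "k < e \<Longrightarrow> tgen e n k \<in> gens e n"
  by (auto simp: gens_def)

lemma sgen_in_gens: "3 \<le> j \<Longrightarrow> j \<le> n \<Longrightarrow> sgen n j \<in> gens e n"
  by (auto simp: gens_def)

lemma gens_cases:
  assumes "x \<in> gens e n"
  obtains k where "k < e" "x = tgen e n k"
    | c where "1 \<le> c" "Suc c < n" "x = sgen n (c + 2)"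
proof -
  { fix j assume "3 \<le> j" "j \<le> n" "x = sgen n j"
    moreover have "j - 2 + 2 = j" using \<open>3 \<le> j\<close> by arith
    ultimately have "1 \<le> j - 2" "Suc (j - 2) < n" "x = sgen n (j - 2 + 2)" by simp_all }
  thus thesis using assms that unfolding gens_def by blast
qed

lemma gens_obtain_swap:
  assumes "x \<in> gens e n" "0 < e" "2 \<le> n"
  obtains c b where "Suc c < n" "\<And>r. b r \<noteq> 1 \<Longrightarrow> c = 0 \<and> r \<le> 1"
    "\<And>r. b r * b (adj_swap c r) = 1" "Geen_data e n (adj_swap c) b"
    "x = monom_mat n (adj_swap c) b"
  using assms(1)
proof (cases rule: gens_cases)
  case (1 k)
  have "tgen_diag e k r \<noteq> 1 \<Longrightarrow> r \<le> 1" for r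
    by (auto simp: tgen_diag_def split: if_splits)
  moreover have "tgen_diag e k r * tgen_diag e k (adj_swap 0 r) = 1" for r
    by (simp add: tgen_diag_def transpose_def)
  ultimately show thesis
    using that[of 0 "tgen_diag e k"] 1 assms Geen_data_tgen tgen_eq_monom_mat by auto
next
  case (2 c)
  show thesis
    by (rule that[of c "\<lambda>_. 1"]) (use 2 Geen_data_sgen sgen_eq_monom_mat in auto)
qed

lemma gens_carrier: "x \<in> gens e n \<Longrightarrow> x \<in> carrier_mat n n"
  by (erule gens_cases) (simp_all add: tgen_def sgen_def)

lemma gens_square:
  assumes "x \<in> gens e n" "0 < e" "2 \<le> n"
  shows "x * x = 1\<^sub>m n"
proof -
  obtain c b where c: "Suc c < n" and b: "\<And>r. b r * b (adj_swap c r) = 1"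
    and x: "x = monom_mat n (adj_swap c) b"
    using gens_obtain_swap[OF assms] by metis
  have "x * x = monom_mat n (adj_swap c \<circ> adj_swap c) (\<lambda>i. b i * b (adj_swap c i))"
    unfolding x using c by (intro monom_mat_mult) (auto simp: transpose_def)
  also have "\<dots> = 1\<^sub>m n"
    unfolding one_eq_monom_mat using b by (intro monom_mat_cong) simp
  finally show ?thesis .
qed

section \<open>The weight\<close>

definition pairs :: "nat \<Rightarrow> (nat \<times> nat) set" where
  "pairs n = {(j, i). j < i \<and> i < n}"

definition pair_weight :: "(nat \<Rightarrow> nat) \<Rightarrow> (nat \<Rightarrow> complex) \<Rightarrow> nat \<times> nat \<Rightarrow> nat" where
  "pair_weight \<sigma> a p = (if \<sigma> (fst p) < \<sigma> (snd p) then (if a (snd p) = 1 then 0 else 2) else 1)"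

definition weight :: "nat \<Rightarrow> (nat \<Rightarrow> nat) \<Rightarrow> (nat \<Rightarrow> complex) \<Rightarrow> nat" where
  "weight n \<sigma> a = (\<Sum>p\<in>pairs n. pair_weight \<sigma> a p)"

lemma finite_pairs [simp]: "finite (pairs n)"
  by (rule finite_subset[of _ "{..<n} \<times> {..<n}"]) (auto simp: pairs_def)

lemma weight_cong:
  "(\<And>i. i < n \<Longrightarrow> \<sigma> i = \<sigma>' i \<and> a i = a' i) \<Longrightarrow> weight n \<sigma> a = weight n \<sigma>' a'"
  unfolding weight_def by (rule sum.cong) (auto simp: pairs_def pair_weight_def)

lemma adj_swap_less_iff:
  assumes "x \<noteq> y" "(x, y) \<noteq> (c, Suc c)" "(x, y) \<noteq> (Suc c, c)"
  shows "adj_swap c x < adj_swap c y \<longleftrightarrow> x < y"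
  using assms by (auto simp: transpose_def)

lemma pair_weight_mult_swap:
  fixes a b :: "nat \<Rightarrow> complex"
  assumes inj: "inj_on \<sigma> {..<n}" and uv: "u < n" "v < n" "\<sigma> u = c" "\<sigma> v = Suc c"
    and b: "\<And>r. b r \<noteq> 1 \<Longrightarrow> c = 0 \<and> r \<le> 1"
    and ji: "j < i" "i < n" "{j, i} \<noteq> {u, v}"
  shows "pair_weight (adj_swap c \<circ> \<sigma>) (\<lambda>i. a i * b (\<sigma> i)) (j, i) = pair_weight \<sigma> a (j, i)"
proof -
  have rows_eq: "x = y" if "\<sigma> x = \<sigma> y" "x < n" "y < n" for x y
    using inj that by (auto dest: inj_onD)
  have not_uv: "(\<sigma> j, \<sigma> i) \<noteq> (c, Suc c)" "(\<sigma> j, \<sigma> i) \<noteq> (Suc c, c)"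
    using rows_eq[of j u] rows_eq[of i v] rows_eq[of j v] rows_eq[of i u] uv ji by auto
  have "\<sigma> j \<noteq> \<sigma> i" using inj ji by (auto simp: inj_on_def)
  hence order: "adj_swap c (\<sigma> j) < adj_swap c (\<sigma> i) \<longleftrightarrow> \<sigma> j < \<sigma> i"
    using adj_swap_less_iff not_uv by simp
  have "b (\<sigma> i) = 1" if "\<sigma> j < \<sigma> i"
  proof (rule ccontr)
    assume "b (\<sigma> i) \<noteq> 1"
    hence "c = 0" "\<sigma> i \<le> 1" using b by auto
    thus False using that not_uv by auto
  qed
  thus ?thesis using order by (auto simp: pair_weight_def)
qed

text \<open>Only the pair of rows carrying the columns \<open>c\<close> and \<open>c + 1\<close> changes its weight.\<close>

lemma weight_mult_swap:
  fixes a b :: "nat \<Rightarrow> complex"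
  assumes inj: "inj_on \<sigma> {..<n}" and uv: "u < n" "v < n" "\<sigma> u = c" "\<sigma> v = Suc c"
    and b: "\<And>r. b r \<noteq> 1 \<Longrightarrow> c = 0 \<and> r \<le> 1"
  defines "\<sigma>' \<equiv> adj_swap c \<circ> \<sigma>" and "a' \<equiv> \<lambda>i. a i * b (\<sigma> i)"
  shows weight_mult_swap_ascent:
      "u < v \<Longrightarrow> weight n \<sigma>' a' + (if a v = 1 then 0 else 2) = weight n \<sigma> a + 1"
    and weight_mult_swap_descent:
      "v < u \<Longrightarrow> weight n \<sigma>' a' + 1 = weight n \<sigma> a + (if a u * b c = 1 then 0 else 2)"
proof -
  define p0 where "p0 = (min u v, max u v)"
  have "u \<noteq> v" using uv by auto
  hence p0: "p0 \<in> pairs n" using uv by (auto simp: p0_def pairs_def min_def max_def)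
  have "pair_weight \<sigma>' a' p = pair_weight \<sigma> a p" if p: "p \<in> pairs n - {p0}" for p
  proof -
    obtain j i where ji: "p = (j, i)" "j < i" "i < n" using p by (auto simp: pairs_def)
    moreover have "{j, i} \<noteq> {u, v}" using p ji by (auto simp: p0_def doubleton_eq_iff)
    ultimately show ?thesis
      unfolding \<sigma>'_def a'_def using pair_weight_mult_swap[OF inj uv b] by simp
  qed
  hence "(\<Sum>p\<in>pairs n - {p0}. pair_weight \<sigma>' a' p) = (\<Sum>p\<in>pairs n - {p0}. pair_weight \<sigma> a p)"
    by (rule sum.cong[OF refl])
  moreover have "weight n \<sigma>' a' = pair_weight \<sigma>' a' p0 + (\<Sum>p\<in>pairs n - {p0}. pair_weight \<sigma>' a' p)"
    and "weight n \<sigma> a = pair_weight \<sigma> a p0 + (\<Sum>p\<in>pairs n - {p0}. pair_weight \<sigma> a p)"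
    unfolding weight_def using p0 by (simp_all add: sum.remove)
  ultimately have "weight n \<sigma>' a' + pair_weight \<sigma> a p0 = weight n \<sigma> a + pair_weight \<sigma>' a' p0"
    by simp
  thus "u < v \<Longrightarrow> weight n \<sigma>' a' + (if a v = 1 then 0 else 2) = weight n \<sigma> a + 1"
    and "v < u \<Longrightarrow> weight n \<sigma>' a' + 1 = weight n \<sigma> a + (if a u * b c = 1 then 0 else 2)"
    using uv by (auto simp: pair_weight_def p0_def \<sigma>'_def a'_def min_def max_def)
qed

lemma card_pairs: "2 * card (pairs n) = n * (n - 1)"
proof (induction n)
  case 0
  show ?case by (simp add: pairs_def)
next
  case (Suc n)
  have "pairs (Suc n) = pairs n \<union> (\<lambda>j. (j, n)) ` {..<n}" by (auto simp: pairs_def)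
  moreover have "pairs n \<inter> (\<lambda>j. (j, n)) ` {..<n} = {}" by (auto simp: pairs_def)
  ultimately have "card (pairs (Suc n)) = card (pairs n) + card ((\<lambda>j. (j, n)) ` {..<n})"
    by (simp add: card_Un_disjoint)
  also have "card ((\<lambda>j. (j, n)) ` {..<n}) = n" by (subst card_image) (auto simp: inj_on_def)
  finally have "2 * card (pairs (Suc n)) = n * (n - 1) + 2 * n" using Suc.IH by simp
  also have "\<dots> = Suc n * (Suc n - 1)" by (cases n) (simp_all add: algebra_simps)
  finally show ?case .
qed

lemma ball_pairs_iff: "(\<forall>p\<in>pairs n. P p) \<longleftrightarrow> (\<forall>j i. j < i \<longrightarrow> i < n \<longrightarrow> P (j, i))"
  by (auto simp: pairs_def)

lemma pair_weight_le: "pair_weight \<sigma> a p \<le> 2"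
  by (simp add: pair_weight_def)

lemma weight_le: "weight n \<sigma> a \<le> n * (n - 1)"
proof -
  have "weight n \<sigma> a \<le> (\<Sum>p\<in>pairs n. 2)"
    unfolding weight_def by (rule sum_mono) (rule pair_weight_le)
  also have "\<dots> = n * (n - 1)" using card_pairs[of n] by simp
  finally show ?thesis .
qed

lemma increasing_self_map_id:
  fixes f :: "nat \<Rightarrow> nat"
  assumes into: "\<forall>i<n. f i < n" and incr: "\<And>i. Suc i < n \<Longrightarrow> f i < f (Suc i)" and "i < n"
  shows "f i = i"
proof -
  have shift: "f i + d \<le> f (i + d)" if "i + d < n" for i d
    using that by (induction d) (auto dest: incr[of "i + _"] intro: Suc_leI order.strict_trans1)
  have "f 0 + i \<le> f i" using shift[of 0 i] \<open>i < n\<close> by simp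
  moreover have "f i + (n - 1 - i) \<le> f (n - 1)" using shift[of i "n - 1 - i"] \<open>i < n\<close> by simp
  moreover have "f (n - 1) < n" using into \<open>i < n\<close> by simp
  ultimately show ?thesis using \<open>i < n\<close> by linarith
qed

lemma increasing_iff_id:
  fixes \<sigma> :: "nat \<Rightarrow> nat"
  assumes into: "\<forall>i<n. \<sigma> i < n"
  shows "(\<forall>j i. j < i \<longrightarrow> i < n \<longrightarrow> \<sigma> j < \<sigma> i \<and> P i)
    \<longleftrightarrow> (\<forall>i<n. \<sigma> i = i) \<and> (\<forall>i. 0 < i \<longrightarrow> i < n \<longrightarrow> P i)"
proof
  assume h: "\<forall>j i. j < i \<longrightarrow> i < n \<longrightarrow> \<sigma> j < \<sigma> i \<and> P i"
  have "\<forall>i<n. \<sigma> i = i" using increasing_self_map_id[OF into] h by blast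
  moreover have "\<forall>i. 0 < i \<longrightarrow> i < n \<longrightarrow> P i" using h by blast
  ultimately show "(\<forall>i<n. \<sigma> i = i) \<and> (\<forall>i. 0 < i \<longrightarrow> i < n \<longrightarrow> P i)" ..
next
  assume "(\<forall>i<n. \<sigma> i = i) \<and> (\<forall>i. 0 < i \<longrightarrow> i < n \<longrightarrow> P i)"
  thus "\<forall>j i. j < i \<longrightarrow> i < n \<longrightarrow> \<sigma> j < \<sigma> i \<and> P i" by auto
qed

lemma weight_eq_0_iff:
  assumes "\<forall>i<n. \<sigma> i < n"
  shows "weight n \<sigma> a = 0 \<longleftrightarrow> (\<forall>i<n. \<sigma> i = i) \<and> (\<forall>i. 0 < i \<longrightarrow> i < n \<longrightarrow> a i = 1)"
proof -
  have "weight n \<sigma> a = 0 \<longleftrightarrow> (\<forall>p\<in>pairs n. pair_weight \<sigma> a p = 0)"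
    unfolding weight_def by simp
  also have "\<dots> \<longleftrightarrow> (\<forall>j i. j < i \<longrightarrow> i < n \<longrightarrow> \<sigma> j < \<sigma> i \<and> a i = 1)"
    unfolding ball_pairs_iff by (auto simp: pair_weight_def)
  also have "\<dots> \<longleftrightarrow> (\<forall>i<n. \<sigma> i = i) \<and> (\<forall>i. 0 < i \<longrightarrow> i < n \<longrightarrow> a i = 1)"
    by (rule increasing_iff_id[OF assms])
  finally show ?thesis .
qed

lemma weight_eq_max_iff:
  assumes "\<forall>i<n. \<sigma> i < n"
  shows "weight n \<sigma> a = n * (n - 1) \<longleftrightarrow> (\<forall>i<n. \<sigma> i = i) \<and> (\<forall>i. 0 < i \<longrightarrow> i < n \<longrightarrow> a i \<noteq> 1)"
proof -
  have "weight n \<sigma> a = (\<Sum>p\<in>pairs n. 2) \<longleftrightarrow> (\<forall>p\<in>pairs n. pair_weight \<sigma> a p = 2)"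
    unfolding weight_def using pair_weight_le
    by (metis (no_types, lifting) finite_pairs order_less_le sum.cong sum_strict_mono_ex1)
  also have "\<dots> \<longleftrightarrow> (\<forall>j i. j < i \<longrightarrow> i < n \<longrightarrow> \<sigma> j < \<sigma> i \<and> a i \<noteq> 1)"
    unfolding ball_pairs_iff by (auto simp: pair_weight_def)
  also have "\<dots> \<longleftrightarrow> (\<forall>i<n. \<sigma> i = i) \<and> (\<forall>i. 0 < i \<longrightarrow> i < n \<longrightarrow> a i \<noteq> 1)"
    by (rule increasing_iff_id[OF assms])
  moreover have "(\<Sum>p\<in>pairs n. 2) = n * (n - 1)" using card_pairs[of n] by simp
  ultimately show ?thesis by simp
qed

section \<open>The length equals the weight\<close>

lemma weight_eq_0_imp_one:
  assumes g: "Geen_data e n \<sigma> a" and n: "0 < n" and w: "weight n \<sigma> a = 0"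
  shows "monom_mat n \<sigma> a = 1\<^sub>m n"
proof -
  have s: "\<forall>i<n. \<sigma> i < n" and p: "(\<Prod>i<n. a i) = 1" using g unfolding Geen_data_def by auto
  have id: "\<forall>i<n. \<sigma> i = i" and a: "\<forall>i. 0 < i \<longrightarrow> i < n \<longrightarrow> a i = 1"
    using w weight_eq_0_iff[OF s] by auto
  have "(\<Prod>i<n. a i) = a 0 * (\<Prod>i\<in>{Suc 0..<n}. a i)"
    using n by (simp add: prod.atLeast_Suc_lessThan flip: atLeast0LessThan)
  also have "(\<Prod>i\<in>{Suc 0..<n}. a i) = 1" using a by (intro prod.neutral) auto
  finally have "a 0 = 1" using p by simp
  hence "a i = 1" if "i < n" for i using a that by (cases i) auto
  thus ?thesis unfolding one_eq_monom_mat using id by (intro monom_mat_cong) simp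
qed

lemma weight_mult_swap_le:
  assumes g: "Geen_data e n \<sigma> a" and c: "Suc c < n" and b: "\<And>r. b r \<noteq> 1 \<Longrightarrow> c = 0 \<and> r \<le> 1"
  shows "weight n (adj_swap c \<circ> \<sigma>) (\<lambda>i. a i * b (\<sigma> i)) \<le> weight n \<sigma> a + 1"
proof -
  have inj: "inj_on \<sigma> {..<n}" using g unfolding Geen_data_def by simp
  obtain u where u: "u < n" "\<sigma> u = c" using Geen_data_preimage[OF g Suc_lessD[OF c]] .
  obtain v where v: "v < n" "\<sigma> v = Suc c" using Geen_data_preimage[OF g c] .
  note uv = u v
  have "u \<noteq> v" using uv by auto
  then consider "u < v" | "v < u" by linarith
  thus ?thesis
  proof cases
    case 1
    show ?thesis using weight_mult_swap_ascent[where a=a and b=b, OF inj uv(1,3,2,4) b 1]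
      by (simp split: if_split_asm)
  next
    case 2
    show ?thesis using weight_mult_swap_descent[where a=a and b=b, OF inj uv(1,3,2,4) b 2]
      by (simp split: if_split_asm)
  qed
qed

lemma word_prod_carrier: "set ws \<subseteq> carrier_mat n n \<Longrightarrow> word_prod n ws \<in> carrier_mat n n"
  by (induction ws) (auto simp: word_prod_def)

lemma word_prod_append:
  assumes "set xs \<subseteq> carrier_mat n n" "set ys \<subseteq> carrier_mat n n"
  shows "word_prod n (xs @ ys) = word_prod n xs * word_prod n ys"
  using assms(1)
proof (induction xs)
  case Nil
  thus ?case using word_prod_carrier[OF assms(2)] by (simp add: word_prod_def)
next
  case (Cons x xs)
  hence "x \<in> carrier_mat n n" "word_prod n xs \<in> carrier_mat n n"
    using word_prod_carrier by auto
  thus ?case using Cons word_prod_carrier[OF assms(2)] by (simp add: word_prod_def assoc_mult_mat)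
qed

lemma word_prod_snoc:
  "set ws \<subseteq> carrier_mat n n \<Longrightarrow> x \<in> carrier_mat n n \<Longrightarrow> word_prod n (ws @ [x]) = word_prod n ws * x"
  using word_prod_append[of ws n "[x]"] by (simp add: word_prod_def)

lemma word_prod_gens_monom_mat:
  assumes e: "0 < e" and n: "2 \<le> n"
  shows "set ws \<subseteq> gens e n \<Longrightarrow>
    \<exists>\<sigma> a. Geen_data e n \<sigma> a \<and> word_prod n ws = monom_mat n \<sigma> a \<and> weight n \<sigma> a \<le> length ws"
proof (induction ws rule: rev_induct)
  case Nil
  show ?case
    by (intro exI[of _ id] exI[of _ "\<lambda>_. 1"])
      (auto simp: Geen_data_def word_prod_def one_eq_monom_mat weight_eq_0_iff)
next
  case (snoc x ws)
  have ws_gens: "set ws \<subseteq> gens e n" and x_gen: "x \<in> gens e n" using snoc.prems by auto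
  obtain \<sigma> a where g: "Geen_data e n \<sigma> a" and ws: "word_prod n ws = monom_mat n \<sigma> a"
    and le: "weight n \<sigma> a \<le> length ws"
    using snoc.IH[OF ws_gens] by blast
  obtain c b where c: "Suc c < n" and b: "\<And>r. b r \<noteq> 1 \<Longrightarrow> c = 0 \<and> r \<le> 1"
    and "\<And>r. b r * b (adj_swap c r) = 1" and gb: "Geen_data e n (adj_swap c) b"
    and x: "x = monom_mat n (adj_swap c) b"
    using gens_obtain_swap[OF x_gen e n] by blast
  have "word_prod n (ws @ [x]) = monom_mat n \<sigma> a * x"
    using ws_gens x_gen gens_carrier ws by (subst word_prod_snoc) auto
  also have "\<dots> = monom_mat n (adj_swap c \<circ> \<sigma>) (\<lambda>i. a i * b (\<sigma> i))"
    unfolding x using g by (intro monom_mat_mult) (simp add: Geen_data_def)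
  finally have "word_prod n (ws @ [x]) = monom_mat n (adj_swap c \<circ> \<sigma>) (\<lambda>i. a i * b (\<sigma> i))" .
  moreover have "weight n (adj_swap c \<circ> \<sigma>) (\<lambda>i. a i * b (\<sigma> i)) \<le> length (ws @ [x])"
    using weight_mult_swap_le[where b=b, OF g c b] le by simp
  ultimately show ?case using Geen_data_mult[OF g gb] by blast
qed

lemma weight_le_length:
  assumes g: "Geen_data e n \<sigma> a" and e: "0 < e" and n: "2 \<le> n"
    and ws: "set ws \<subseteq> gens e n" "word_prod n ws = monom_mat n \<sigma> a"
  shows "weight n \<sigma> a \<le> length ws"
proof -
  obtain \<sigma>' a' where eq: "word_prod n ws = monom_mat n \<sigma>' a'" and le: "weight n \<sigma>' a' \<le> length ws"
    using word_prod_gens_monom_mat[OF e n ws(1)] by blast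
  have "\<sigma> i = \<sigma>' i \<and> a i = a' i" if "i < n" for i
  proof (rule monom_mat_eqD)
    show "monom_mat n \<sigma> a = monom_mat n \<sigma>' a'" using ws(2) eq by simp
    show "\<sigma> i < n" using g that by (simp add: Geen_data_def)
  qed (use Geen_data_nonzero[OF g e] that in auto)
  thus ?thesis using weight_cong[of n \<sigma> \<sigma>' a a'] le by simp
qed

definition weight_locally_minimal :: "nat \<Rightarrow> nat \<Rightarrow> (nat \<Rightarrow> nat) \<Rightarrow> (nat \<Rightarrow> complex) \<Rightarrow> bool" where
  "weight_locally_minimal e n \<sigma> a \<longleftrightarrow> (\<forall>x\<in>gens e n. \<forall>\<sigma>' a'. Geen_data e n \<sigma>' a' \<longrightarrow>
     monom_mat n \<sigma> a * x = monom_mat n \<sigma>' a' \<longrightarrow> weight n \<sigma> a \<le> weight n \<sigma>' a')"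

lemma weight_locally_minimal_swap:
  assumes m: "weight_locally_minimal e n \<sigma> a" and g: "Geen_data e n \<sigma> a"
    and uv: "u < n" "v < n" "\<sigma> u = c" "\<sigma> v = Suc c"
    and x: "monom_mat n (adj_swap c) b \<in> gens e n" and gb: "Geen_data e n (adj_swap c) b"
    and b: "\<And>r. b r \<noteq> 1 \<Longrightarrow> c = 0 \<and> r \<le> 1" and cancel: "a u * b c = 1"
  shows "u < v \<and> a v = 1"
proof -
  have s: "\<forall>i<n. \<sigma> i < n" and inj: "inj_on \<sigma> {..<n}" using g by (auto simp: Geen_data_def)
  have le: "weight n \<sigma> a \<le> weight n (adj_swap c \<circ> \<sigma>) (\<lambda>i. a i * b (\<sigma> i))"
    using m x Geen_data_mult[OF g gb] monom_mat_mult[OF s, of a "adj_swap c" b]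
    unfolding weight_locally_minimal_def by blast
  have "\<not> v < u"
    using weight_mult_swap_descent[where a=a and b=b, OF inj uv b] le cancel by auto
  moreover have "u \<noteq> v" using uv by auto
  ultimately have "u < v" by linarith
  moreover have "a v = 1"
    using weight_mult_swap_ascent[where a=a and b=b, OF inj uv b \<open>u < v\<close>] le
    by (auto split: if_split_asm)
  ultimately show ?thesis ..
qed

lemma weight_locally_minimal_adjacent:
  assumes m: "weight_locally_minimal e n \<sigma> a" and g: "Geen_data e n \<sigma> a"
    and e: "0 < e" and n: "2 \<le> n"
  shows "Suc c < n \<Longrightarrow> u < n \<Longrightarrow> v < n \<Longrightarrow> \<sigma> u = c \<Longrightarrow> \<sigma> v = Suc c \<Longrightarrow> u < v \<and> a v = 1"
proof (induction c arbitrary: u v)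
  case 0
  \<comment> \<open>the generator \<open>t\<^sub>k\<close> with \<open>\<zeta>\<^sup>k = a u\<close> cancels the root of unity of row \<open>u\<close>\<close>
  obtain k where k: "k < e" "zeta e ^ k = a u"
    using root_unity_eq_zeta_power[OF e, of "a u"] g 0 by (auto simp: Geen_data_def)
  have "monom_mat n (adj_swap 0) (tgen_diag e k) \<in> gens e n"
    using tgen_in_gens[OF k(1)] by (simp add: tgen_eq_monom_mat)
  moreover have "tgen_diag e k r \<noteq> 1 \<Longrightarrow> 0 = 0 \<and> r \<le> 1" for r
    by (auto simp: tgen_diag_def split: if_splits)
  moreover have "a u * tgen_diag e k 0 = 1"
    using k Geen_data_nonzero[OF g e] 0 by (simp add: tgen_diag_def)
  ultimately show ?case
    using weight_locally_minimal_swap[OF m g 0(2-5) _ Geen_data_tgen[OF e n]] by blast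
next
  case (Suc c)
  obtain w where "w < n" "\<sigma> w = c" using Geen_data_preimage[OF g, of c] Suc.prems(1) by auto
  hence "a u = 1" using Suc.IH[of w u] Suc.prems by auto
  moreover have "monom_mat n (adj_swap (Suc c)) (\<lambda>_. 1) \<in> gens e n"
    unfolding sgen_eq_monom_mat[symmetric] by (rule sgen_in_gens) (use Suc.prems(1) in auto)
  ultimately show ?case
    using weight_locally_minimal_swap[OF m g, of u v "Suc c" "\<lambda>_. 1"] Suc.prems
      Geen_data_sgen[of "Suc c" n e]
    by simp
qed

lemma weight_locally_minimal_imp_0:
  assumes m: "weight_locally_minimal e n \<sigma> a" and g: "Geen_data e n \<sigma> a"
    and e: "0 < e" and n: "2 \<le> n"
  shows "weight n \<sigma> a = 0"
proof -
  note adjacent = weight_locally_minimal_adjacent[OF m g e n]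
  have s: "\<forall>i<n. \<sigma> i < n" using g by (simp add: Geen_data_def)
  define \<rho> where "\<rho> = inv_into {..<n} \<sigma>"
  have \<rho>: "\<rho> c < n \<and> \<sigma> (\<rho> c) = c" if "c < n" for c
    using Geen_data_image[OF g] that unfolding \<rho>_def by (metis f_inv_into_f inv_into_into lessThan_iff)
  have "\<rho> c = c" if "c < n" for c
    using increasing_self_map_id[of n \<rho>] \<rho> adjacent that by (meson Suc_lessD)
  hence id: "\<forall>i<n. \<sigma> i = i" using \<rho> by metis
  have "a i = 1" if "0 < i" "i < n" for i
    using adjacent[of "i - 1" "i - 1" i] id that by simp
  thus ?thesis using weight_eq_0_iff[OF s] id by blast
qed

lemma exists_descent:
  assumes g: "Geen_data e n \<sigma> a" and e: "0 < e" and n: "2 \<le> n" and pos: "0 < weight n \<sigma> a"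
  shows "\<exists>x\<in>gens e n. \<exists>\<sigma>' a'. Geen_data e n \<sigma>' a' \<and> monom_mat n \<sigma> a * x = monom_mat n \<sigma>' a'
    \<and> weight n \<sigma>' a' < weight n \<sigma> a"
proof (rule ccontr)
  assume "\<not> ?thesis"
  hence "weight_locally_minimal e n \<sigma> a"
    unfolding weight_locally_minimal_def by (meson not_le)
  thus False using weight_locally_minimal_imp_0[OF _ g e n] pos by simp
qed

lemma exists_word_le_weight:
  assumes e: "0 < e" and n: "2 \<le> n"
  shows "Geen_data e n \<sigma> a \<Longrightarrow>
    \<exists>ws. set ws \<subseteq> gens e n \<and> length ws \<le> weight n \<sigma> a \<and> word_prod n ws = monom_mat n \<sigma> a"
proof (induction "weight n \<sigma> a" arbitrary: \<sigma> a rule: less_induct)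
  case less
  show ?case
  proof (cases "weight n \<sigma> a = 0")
    case True
    hence "word_prod n [] = monom_mat n \<sigma> a"
      using weight_eq_0_imp_one[OF less.prems] n by (simp add: word_prod_def)
    thus ?thesis by (intro exI[of _ "[]"]) simp
  next
    case False
    then obtain x \<sigma>' a' where x: "x \<in> gens e n" and g': "Geen_data e n \<sigma>' a'"
      and mult: "monom_mat n \<sigma> a * x = monom_mat n \<sigma>' a'" and dec: "weight n \<sigma>' a' < weight n \<sigma> a"
      using exists_descent[OF less.prems e n] by auto
    obtain ws where ws: "set ws \<subseteq> gens e n" "length ws \<le> weight n \<sigma>' a'"
      "word_prod n ws = monom_mat n \<sigma>' a'"
      using less.hyps[OF dec g'] by blast
    have xc: "x \<in> carrier_mat n n" using gens_carrier[OF x] .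
    have "word_prod n (ws @ [x]) = monom_mat n \<sigma> a * x * x"
      using ws(1,3) xc gens_carrier mult by (subst word_prod_snoc) auto
    also have "\<dots> = monom_mat n \<sigma> a"
      using gens_square[OF x e n] xc by (simp add: assoc_mult_mat[of _ n n _ n _ n])
    finally show ?thesis
      using ws x dec by (intro exI[of _ "ws @ [x]"]) auto
  qed
qed

lemma wlen_monom_mat:
  assumes g: "Geen_data e n \<sigma> a" and e: "0 < e" and n: "2 \<le> n"
  shows "wlen e n (monom_mat n \<sigma> a) = weight n \<sigma> a"
  unfolding wlen_def
proof (rule Least_equality)
  obtain ws where ws: "set ws \<subseteq> gens e n" "length ws \<le> weight n \<sigma> a"
    "word_prod n ws = monom_mat n \<sigma> a"
    using exists_word_le_weight[OF e n g] by blast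
  moreover have "weight n \<sigma> a \<le> length ws" using weight_le_length[OF g e n ws(1,3)] .
  ultimately show "\<exists>ws. set ws \<subseteq> gens e n \<and> length ws = weight n \<sigma> a \<and> word_prod n ws = monom_mat n \<sigma> a"
    by (intro exI[of _ ws]) simp
qed (use weight_le_length[OF g e n] in blast)

section \<open>Elements of maximal length\<close>

lemma wlen_le:
  assumes "w \<in> Geen e n" "0 < e" "2 \<le> n"
  shows "wlen e n w \<le> n * (n - 1)"
proof -
  obtain \<sigma> a where "Geen_data e n \<sigma> a" "w = monom_mat n \<sigma> a"
    using Geen_obtain_data[OF assms(1)] .
  thus ?thesis using wlen_monom_mat assms weight_le by simp
qed

lemma diagonal_monom_mat_iff:
  assumes "\<forall>i<n. \<sigma> i < n" "\<forall>i<n. a i \<noteq> 0"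
  shows "diagonal n (monom_mat n \<sigma> a) \<longleftrightarrow> (\<forall>i<n. \<sigma> i = i)"
proof
  assume d: "diagonal n (monom_mat n \<sigma> a)"
  show "\<forall>i<n. \<sigma> i = i"
  proof (intro allI impI)
    fix i assume i: "i < n"
    hence "monom_mat n \<sigma> a $$ (i, \<sigma> i) \<noteq> 0" using assms by simp
    thus "\<sigma> i = i" using d i assms(1) unfolding diagonal_def by metis
  qed
qed (simp add: diagonal_def)

lemma ball_atLeast2_atMost_iff: "(\<forall>i\<in>{2..n}. P i) \<longleftrightarrow> (\<forall>r. 0 < r \<longrightarrow> r < n \<longrightarrow> P (Suc r))"
proof
  assume "\<forall>r. 0 < r \<longrightarrow> r < n \<longrightarrow> P (Suc r)"
  moreover have "i = Suc (i - 1)" "0 < i - 1" "i - 1 < n" if "i \<in> {2..n}" for i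
    using that by auto
  ultimately show "\<forall>i\<in>{2..n}. P i" by metis
qed auto

lemma wlen_eq_max_iff:
  assumes w: "w \<in> Geen e n" and e: "0 < e" and n: "2 \<le> n"
  shows "wlen e n w = n * (n - 1) \<longleftrightarrow> diagonal n w \<and> (\<forall>i\<in>{2..n}. entry w i i \<noteq> 1)"
proof -
  obtain \<sigma> a where g: "Geen_data e n \<sigma> a" and w_eq: "w = monom_mat n \<sigma> a"
    using Geen_obtain_data[OF w] .
  have s: "\<forall>i<n. \<sigma> i < n" using g by (simp add: Geen_data_def)
  have nz: "\<forall>i<n. a i \<noteq> 0" using Geen_data_nonzero[OF g e] by blast
  have "wlen e n w = n * (n - 1) \<longleftrightarrow> (\<forall>i<n. \<sigma> i = i) \<and> (\<forall>r. 0 < r \<longrightarrow> r < n \<longrightarrow> a r \<noteq> 1)"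
    unfolding w_eq wlen_monom_mat[OF g e n] by (rule weight_eq_max_iff[OF s])
  moreover have "entry w (Suc r) (Suc r) = a r" if "\<forall>i<n. \<sigma> i = i" "r < n" for r
    using that by (simp add: w_eq entry_def)
  ultimately show ?thesis
    unfolding ball_atLeast2_atMost_iff w_eq diagonal_monom_mat_iff[OF s nz] by auto
qed

text \<open>Indexed like \<open>entry\<close>: \<open>c i\<close> is the \<open>(i, i)\<close> entry for \<open>2 \<le> i \<le> n\<close>; the
  \<open>(1, 1)\<close> entry is forced by the product condition.\<close>

definition Geen_diag :: "nat \<Rightarrow> (nat \<Rightarrow> complex) \<Rightarrow> complex mat" where
  "Geen_diag n c = monom_mat n id (\<lambda>r. if r = 0 then inverse (\<Prod>i\<in>{2..n}. c i) else c (Suc r))"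

lemma Geen_diag_cong: "(\<And>i. 2 \<le> i \<Longrightarrow> i \<le> n \<Longrightarrow> c i = c' i) \<Longrightarrow> Geen_diag n c = Geen_diag n c'"
  unfolding Geen_diag_def by (intro monom_mat_cong) (auto intro!: prod.cong)

lemma entry_Geen_diag: "2 \<le> i \<Longrightarrow> i \<le> n \<Longrightarrow> entry (Geen_diag n c) i i = c i"
  by (simp add: Geen_diag_def entry_def)

lemma diagonal_Geen_diag: "diagonal n (Geen_diag n c)"
  by (simp add: diagonal_def Geen_diag_def)

lemma Geen_diag_one: "Geen_diag n (\<lambda>_. 1) = 1\<^sub>m n"
  unfolding Geen_diag_def one_eq_monom_mat by (rule monom_mat_cong) simp

lemma Geen_diag_mult: "Geen_diag n c * Geen_diag n c' = Geen_diag n (\<lambda>i. c i * c' i)"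
  unfolding Geen_diag_def
  by (subst monom_mat_mult) (auto intro!: monom_mat_cong simp: prod.distrib)

lemma prod_atLeast2_atMost_shift: "(\<Prod>i\<in>{2..n}. f i) = (\<Prod>r\<in>{1..<n}. f (Suc r))"
proof -
  have "{2..n} = {Suc 1..<Suc n}" by auto
  thus ?thesis by (simp only: prod.shift_bounds_Suc_ivl)
qed

lemma Geen_diag_in_Geen:
  assumes e: "0 < e" and n: "0 < n" and c: "\<forall>i\<in>{2..n}. c i ^ e = 1"
  shows "Geen_diag n c \<in> Geen e n"
proof -
  define P where "P = (\<Prod>i\<in>{2..n}. c i)"
  have "P ^ e = 1" unfolding P_def prod_power_distrib using c by (intro prod.neutral) simp
  hence "P \<noteq> 0" using e by (metis zero_neq_one zero_power)
  define a where "a r = (if r = 0 then inverse P else c (Suc r))" for r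
  have "(\<Prod>r<n. a r) = a 0 * (\<Prod>r\<in>{1..<n}. a r)"
    using n by (simp add: prod.atLeast_Suc_lessThan flip: atLeast0LessThan)
  also have "(\<Prod>r\<in>{1..<n}. a r) = P"
    unfolding P_def prod_atLeast2_atMost_shift by (rule prod.cong) (auto simp: a_def)
  finally have "(\<Prod>r<n. a r) = 1" using \<open>P \<noteq> 0\<close> by (simp add: a_def)
  moreover have "a r ^ e = 1" if "r < n" for r
    using c \<open>P ^ e = 1\<close> that by (auto simp: a_def power_inverse)
  ultimately have "Geen_data e n id a" by (simp add: Geen_data_def)
  moreover have "Geen_diag n c = monom_mat n id a" unfolding Geen_diag_def a_def[abs_def] P_def ..
  ultimately show ?thesis using monom_mat_in_Geen[OF _ e] by simp
qed

lemma Geen_diagonal_eq: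
  assumes w: "w \<in> Geen e n" and d: "diagonal n w" and e: "0 < e"
  shows "w = Geen_diag n (\<lambda>i. entry w i i)"
proof -
  obtain \<sigma> a where g: "Geen_data e n \<sigma> a" and w_eq: "w = monom_mat n \<sigma> a"
    using Geen_obtain_data[OF w] .
  have s: "\<forall>i<n. \<sigma> i < n" and p: "(\<Prod>i<n. a i) = 1" using g by (auto simp: Geen_data_def)
  have nz: "\<forall>i<n. a i \<noteq> 0" using Geen_data_nonzero[OF g e] by blast
  have id: "\<forall>i<n. \<sigma> i = i" using d diagonal_monom_mat_iff[OF s nz] w_eq by simp
  have entry: "entry w (Suc r) (Suc r) = a r" if "r < n" for r
    using id that by (simp add: w_eq entry_def)
  have "a 0 = inverse (\<Prod>i\<in>{2..n}. entry w i i)" if "0 < n"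
  proof -
    have "(\<Prod>i\<in>{2..n}. entry w i i) = (\<Prod>r\<in>{1..<n}. a r)"
      unfolding prod_atLeast2_atMost_shift using entry by (intro prod.cong) auto
    moreover have "a 0 * (\<Prod>r\<in>{1..<n}. a r) = 1"
      using p that by (simp add: prod.atLeast_Suc_lessThan flip: atLeast0LessThan)
    ultimately show ?thesis by (metis inverse_unique mult.commute)
  qed
  hence "monom_mat n \<sigma> a = Geen_diag n (\<lambda>i. entry w i i)"
    unfolding Geen_diag_def using id entry by (intro monom_mat_cong) auto
  thus ?thesis using w_eq by simp
qed

lemma diagonal_entry_root:
  assumes w: "w \<in> Geen e n" and d: "diagonal n w" and e: "0 < e" and i: "1 \<le> i" "i \<le> n"
  shows "entry w i i ^ e = 1"
proof -
  obtain \<sigma> a where g: "Geen_data e n \<sigma> a" and w_eq: "w = monom_mat n \<sigma> a"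
    using Geen_obtain_data[OF w] .
  have s: "\<forall>i<n. \<sigma> i < n" using g by (simp add: Geen_data_def)
  have "\<forall>i<n. \<sigma> i = i"
    using d diagonal_monom_mat_iff[OF s] Geen_data_nonzero[OF g e] w_eq by simp
  hence "entry w i i = a (i - 1)" using i by (simp add: w_eq entry_def)
  thus ?thesis using g i by (simp add: Geen_data_def)
qed

lemma max_length_eq_image:
  assumes e: "0 < e" and n: "2 \<le> n"
  shows "{w \<in> Geen e n. wlen e n w = n * (n - 1)}
    = Geen_diag n ` (\<Pi>\<^sub>E i\<in>{2..n}. {z. z ^ e = 1} - {1})"
proof (intro equalityI subsetI)
  fix w assume "w \<in> {w \<in> Geen e n. wlen e n w = n * (n - 1)}"
  hence w: "w \<in> Geen e n" and "wlen e n w = n * (n - 1)" by simp_all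
  hence d: "diagonal n w" and ne: "\<forall>i\<in>{2..n}. entry w i i \<noteq> 1"
    using wlen_eq_max_iff[OF w e n] by simp_all
  have "restrict (\<lambda>i. entry w i i) {2..n} \<in> (\<Pi>\<^sub>E i\<in>{2..n}. {z. z ^ e = 1} - {1})"
    using ne diagonal_entry_root[OF w d e] by simp
  moreover have "Geen_diag n (\<lambda>i. entry w i i) = Geen_diag n (restrict (\<lambda>i. entry w i i) {2..n})"
    by (rule Geen_diag_cong) simp
  hence "w = Geen_diag n (restrict (\<lambda>i. entry w i i) {2..n})"
    using Geen_diagonal_eq[OF w d e] by simp
  ultimately show "w \<in> Geen_diag n ` (\<Pi>\<^sub>E i\<in>{2..n}. {z. z ^ e = 1} - {1})" by blast
next
  fix w assume "w \<in> Geen_diag n ` (\<Pi>\<^sub>E i\<in>{2..n}. {z. z ^ e = 1} - {1})"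
  then obtain c where c: "c \<in> (\<Pi>\<^sub>E i\<in>{2..n}. {z. z ^ e = 1} - {1})" and w: "w = Geen_diag n c" ..
  have "\<forall>i\<in>{2..n}. c i ^ e = 1" using c by auto
  hence gw: "w \<in> Geen e n" using Geen_diag_in_Geen[OF e, of n c] n w by simp
  moreover have "\<forall>i\<in>{2..n}. entry w i i \<noteq> 1" using c w by (auto simp: entry_Geen_diag)
  hence "wlen e n w = n * (n - 1)"
    using wlen_eq_max_iff[OF gw e n] diagonal_Geen_diag w by blast
  ultimately show "w \<in> {w \<in> Geen e n. wlen e n w = n * (n - 1)}" by simp
qed

lemma card_max_length:
  assumes e: "0 < e" and n: "2 \<le> n"
  shows "card {w \<in> Geen e n. wlen e n w = n * (n - 1)} = (e - 1) ^ (n - 1)"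
proof -
  define R where "R = {z :: complex. z ^ e = 1} - {1}"
  have card_R: "card R = e - 1"
    unfolding R_def using card_roots_unity_eq[OF e] finite_roots_unity[of e] e
    by (subst card_Diff_singleton) auto
  have "inj_on (Geen_diag n) (\<Pi>\<^sub>E i\<in>{2..n}. R)"
  proof (rule inj_onI)
    fix c c' assume c: "c \<in> (\<Pi>\<^sub>E i\<in>{2..n}. R)" and c': "c' \<in> (\<Pi>\<^sub>E i\<in>{2..n}. R)"
      and eq: "Geen_diag n c = Geen_diag n c'"
    show "c = c'"
    proof (rule PiE_ext[OF c c'])
      fix i assume "i \<in> {2..n}"
      thus "c i = c' i" using eq entry_Geen_diag[of i n] by (metis atLeastAtMost_iff)
    qed
  qed
  hence "card {w \<in> Geen e n. wlen e n w = n * (n - 1)} = card (\<Pi>\<^sub>E i\<in>{2..n}. R)"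
    unfolding max_length_eq_image[OF e n] R_def by (rule card_image)
  also have "\<dots> = (e - 1) ^ (n - 1)" by (simp add: card_PiE card_R)
  finally show ?thesis .
qed

section \<open>The reduced word\<close>

definition conj_word :: "nat \<Rightarrow> nat \<Rightarrow> complex mat list \<Rightarrow> complex mat list" where
  "conj_word n i w = map (sgen n) (rev [3..<i+1]) @ w @ map (sgen n) [3..<i+1]"

lemma conj_word_Suc:
  "2 \<le> i \<Longrightarrow> conj_word n (Suc i) w = sgen n (Suc i) # conj_word n i w @ [sgen n (Suc i)]"
  by (simp add: conj_word_def)

lemma Geen_diag_single:
  assumes "2 \<le> i" "i \<le> n"
  shows "Geen_diag n (\<lambda>j. if j = i then z else 1)
    = monom_mat n id (\<lambda>r. if r = 0 then inverse z else if r = i - 1 then z else 1)"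
  unfolding Geen_diag_def using assms by (intro monom_mat_cong) (auto simp: prod.delta)

lemma sgen_conj_monom_mat:
  assumes "Suc c < n"
  shows "sgen n (c + 2) * monom_mat n id d * sgen n (c + 2) = monom_mat n id (d \<circ> adj_swap c)"
proof -
  have into: "\<forall>i<n. adj_swap c i < n" using assms by (auto simp: transpose_def)
  have "sgen n (c + 2) * monom_mat n id d * sgen n (c + 2)
      = monom_mat n (id \<circ> adj_swap c) (\<lambda>i. 1 * d (adj_swap c i)) * monom_mat n (adj_swap c) (\<lambda>_. 1)"
    unfolding sgen_eq_monom_mat monom_mat_mult[OF into] ..
  also have "\<dots> = monom_mat n (adj_swap c \<circ> (id \<circ> adj_swap c)) (\<lambda>i. 1 * d (adj_swap c i) * 1)"
    using into by (intro monom_mat_mult) simp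
  also have "\<dots> = monom_mat n id (d \<circ> adj_swap c)" by (rule monom_mat_cong) simp
  finally show ?thesis .
qed

lemma word_prod_conj_word:
  assumes w: "set w \<subseteq> carrier_mat n n" "word_prod n w = Geen_diag n (\<lambda>j. if j = 2 then z else 1)"
    and i: "2 \<le> i" "i \<le> n"
  shows "word_prod n (conj_word n i w) = Geen_diag n (\<lambda>j. if j = i then z else 1)"
  using i
proof (induction i rule: dec_induct)
  case base
  thus ?case using w by (simp add: conj_word_def)
next
  case (step m)
  have m: "2 \<le> m" "m \<le> n" "2 \<le> Suc m" using step by simp_all
  have carrier: "set (conj_word n m w) \<subseteq> carrier_mat n n"
    using w(1) by (auto simp: conj_word_def sgen_def)
  have sc: "sgen n (Suc m) \<in> carrier_mat n n" by (simp add: sgen_def)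
  have "word_prod n (conj_word n (Suc m) w)
      = sgen n (Suc m) * (word_prod n (conj_word n m w) * sgen n (Suc m))"
    unfolding conj_word_Suc[OF m(1)] word_prod_snoc[OF carrier sc, symmetric]
    by (simp add: word_prod_def)
  also have "\<dots> = sgen n (m - 1 + 2) * word_prod n (conj_word n m w) * sgen n (m - 1 + 2)"
    using sc word_prod_carrier[OF carrier] m by (simp add: assoc_mult_mat)
  also have "\<dots> = monom_mat n id ((\<lambda>r. if r = 0 then inverse z else if r = m - 1 then z else 1)
      \<circ> adj_swap (m - 1))"
    unfolding step.IH[OF m(2)] Geen_diag_single[OF m(1,2)]
    using step.prems m by (intro sgen_conj_monom_mat) simp
  also have "\<dots> = Geen_diag n (\<lambda>j. if j = Suc m then z else 1)"
    unfolding Geen_diag_single[OF m(3) step.prems] using m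
    by (intro monom_mat_cong) (auto simp: transpose_def)
  finally show ?case .
qed

lemma word_prod_block:
  assumes "2 \<le> i" "i \<le> n"
  shows "word_prod n (block e n k i) = Geen_diag n (\<lambda>j. if j = i then zeta e ^ k i else 1)"
proof -
  have "word_prod n [tgen e n (k i), tgen e n 0] = tgen e n (k i) * tgen e n 0"
    by (simp add: word_prod_def tgen_def)
  also have "\<dots> = Geen_diag n (\<lambda>j. if j = 2 then zeta e ^ k i else 1)"
    unfolding tgen_eq_monom_mat Geen_diag_single[OF order.refl order.trans[OF assms]]
    using assms by (subst monom_mat_mult) (auto intro!: monom_mat_cong simp: transpose_def tgen_diag_def)
  finally show ?thesis
    unfolding block_def conj_word_def[symmetric]
    using assms by (intro word_prod_conj_word) (auto simp: tgen_def)
qed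

lemma word_prod_blocks:
  "m \<le> n \<Longrightarrow> word_prod n (concat (map (block e n k) [2..<Suc m]))
    = Geen_diag n (\<lambda>i. if i \<le> m then zeta e ^ k i else 1)"
proof (induction m)
  case 0
  have "Geen_diag n (\<lambda>i. if i \<le> 0 then zeta e ^ k i else 1) = Geen_diag n (\<lambda>_. 1)"
    by (rule Geen_diag_cong) simp
  thus ?case by (simp add: word_prod_def Geen_diag_one)
next
  case (Suc m)
  show ?case
  proof (cases "m = 0")
    case True
    have "Geen_diag n (\<lambda>i. if i \<le> Suc m then zeta e ^ k i else 1) = Geen_diag n (\<lambda>_. 1)"
      using True by (intro Geen_diag_cong) simp
    thus ?thesis using True by (simp add: word_prod_def Geen_diag_one)
  next
    case False
    have carrier: "set (concat (map (block e n k) xs)) \<subseteq> carrier_mat n n" for xs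
      by (auto simp: block_def sgen_def tgen_def)
    have "word_prod n (concat (map (block e n k) [2..<Suc (Suc m)]))
        = word_prod n (concat (map (block e n k) [2..<Suc m])) * word_prod n (block e n k (Suc m))"
      using False carrier[of "[2..<Suc m]"] carrier[of "[Suc m]"] by (simp add: word_prod_append)
    also have "\<dots> = Geen_diag n (\<lambda>i. (if i \<le> m then zeta e ^ k i else 1)
        * (if i = Suc m then zeta e ^ k (Suc m) else 1))"
      using Suc False by (simp add: word_prod_block Geen_diag_mult)
    also have "\<dots> = Geen_diag n (\<lambda>i. if i \<le> Suc m then zeta e ^ k i else 1)"
      by (rule Geen_diag_cong) auto
    finally show ?thesis .
  qed
qed

lemma word_prod_max_word: "word_prod n (max_word e n k) = Geen_diag n (\<lambda>i. zeta e ^ k i)"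
proof -
  have "Geen_diag n (\<lambda>i. if i \<le> n then zeta e ^ k i else 1) = Geen_diag n (\<lambda>i. zeta e ^ k i)"
    by (rule Geen_diag_cong) simp
  thus ?thesis unfolding max_word_def using word_prod_blocks[of n n e k] by simp
qed

lemma length_block: "length (block e n k i) = 2 * (i - 2) + 2"
  by (simp add: block_def) arith

lemma length_max_word: "length (max_word e n k) = n * (n - 1)"
proof -
  have "length (concat (map (block e n k) [2..<Suc m])) = m * (m - 1)" for m
  proof (induction m)
    case (Suc m)
    show ?case
    proof (cases "m = 0")
      case False
      hence "[2..<Suc (Suc m)] = [2..<Suc m] @ [Suc m]" by simp
      hence "length (concat (map (block e n k) [2..<Suc (Suc m)])) = m * (m - 1) + (2 * (Suc m - 2) + 2)"
        using Suc.IH by (simp add: length_block)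
      thus ?thesis using False by (cases m) (simp_all add: algebra_simps)
    qed simp
  qed simp
  thus ?thesis by (simp add: max_word_def)
qed

theorem mainTheorem4:
  fixes e n :: nat
  assumes "e \<ge> 2" and "n \<ge> 2"
  shows "(\<forall>w\<in>Geen e n. wlen e n w \<le> n * (n - 1))
    \<and> (\<exists>w\<in>Geen e n. wlen e n w = n * (n - 1))
    \<and> (\<forall>w\<in>Geen e n. wlen e n w = n * (n - 1) \<longleftrightarrow>
          (diagonal n w \<and> (\<forall>i\<in>{2..n}. entry w i i \<noteq> 1)))
    \<and> (\<forall>w\<in>Geen e n. \<forall>k. diagonal n w \<and> (\<forall>i\<in>{2..n}. entry w i i \<noteq> 1)
          \<and> (\<forall>i\<in>{2..n}. 1 \<le> k i \<and> k i \<le> e - 1 \<and> entry w i i = zeta e ^ k i)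
          \<longrightarrow> word_prod n (max_word e n k) = w
              \<and> length (max_word e n k) = wlen e n w)
    \<and> card {w\<in>Geen e n. wlen e n w = n * (n - 1)} = (e - 1) ^ (n - 1)"
proof -
  have e: "0 < e" and n: "2 \<le> n" using assms by simp_all
  have max_iff: "\<forall>w\<in>Geen e n. wlen e n w = n * (n - 1) \<longleftrightarrow>
      (diagonal n w \<and> (\<forall>i\<in>{2..n}. entry w i i \<noteq> 1))"
    using wlen_eq_max_iff[OF _ e n] by blast
  have card: "card {w\<in>Geen e n. wlen e n w = n * (n - 1)} = (e - 1) ^ (n - 1)"
    by (rule card_max_length[OF e n])
  hence "0 < card {w\<in>Geen e n. wlen e n w = n * (n - 1)}" using assms(1) by simp
  hence "{w\<in>Geen e n. wlen e n w = n * (n - 1)} \<noteq> {}" by (metis card_gt_0_iff)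
  moreover have "word_prod n (max_word e n k) = w \<and> length (max_word e n k) = wlen e n w"
    if w: "w \<in> Geen e n" and d: "diagonal n w" and ne: "\<forall>i\<in>{2..n}. entry w i i \<noteq> 1"
      and k: "\<forall>i\<in>{2..n}. entry w i i = zeta e ^ k i" for w k
  proof
    have "w = Geen_diag n (\<lambda>i. entry w i i)" by (rule Geen_diagonal_eq[OF w d e])
    also have "\<dots> = Geen_diag n (\<lambda>i. zeta e ^ k i)" using k by (intro Geen_diag_cong) simp
    finally show "word_prod n (max_word e n k) = w" by (simp add: word_prod_max_word)
    show "length (max_word e n k) = wlen e n w" using max_iff w d ne length_max_word by metis
  qed
  ultimately show ?thesis using wlen_le[OF _ e n] max_iff card by blast
qed

end
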